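(* Let $G=\operatorname{Gp}\langle X\mid R\rangle$ be a group, and let $\Re$ be a complete rewriting system for $G$ on the alphabet $X\cup X^{-1}$ which satisfies the condition $C^{+}$. Let $M=\operatorname{Mon}\langle X\mid \Re^{+}\rangle$ be the monoid presented by the generators $X$ and the relations $l=r$ for $(l\rightarrow r)\in\Re^{+}$. Then the monoid homomorphism $M\to G$ induced by the identity on $X$ is injective, i.e. for positive words $u,v\in X^{*}$, $u=v$ in $G$ implies $u=v$ in $M$; so $M$ embeds into $G$ as the submonoid of $G$ represented by positive words. In particular, any monoid $N$ isomorphic to $M$ embeds into $G$.
   Context: A rewriting system on an alphabet $\Sigma$ is a set of ordered pairs (rules) $l\rightarrow r$ in $\Sigma^{*}\times\Sigma^{*}$; a word $ulv$ reduces to $urv$ for any rule $l\rightarrow r$. $\Re$ is terminating if there is no infinite chain of reductions, confluent if any two words with a common ancestor under $\rightarrow^{*}$ have a common descendant, and complete if terminating and confluent. $\equiv_{\Re}$ denotes the congruence on $\Sigma^{*}$ generated by the rules of $\Re$. The monoid presentation of $G$ is $\operatorname{Mon}\langle X\cup X^{-1}\mid R\cup R_{0}\rangle$ with $R_{0}=\{xx^{-1}=1,\ x^{-1}x=1 : x\in X\}$; a rewriting system for $G$ is a rewriting system $\Re$ on $X\cup X^{-1}$ whose congruence $\equiv_{\Re}$ equals the congruence generated by $R\cup R_{0}$. A word in $(X\cup X^{-1})^{*}$ is positive if it lies in $X^{*}$ (the empty word $1$ counts as positive). $\Re^{+}$ denotes the set of all rules of $\Re$ whose left-hand side is a positive word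 (rules $l\rightarrow 1$ with $l$ positive are allowed). $\Re$ satisfies the condition $C^{+}$ if $\Re^{+}\neq\emptyset$ and every rule of $\Re$ with positive left-hand side has a positive right-hand side. *)

theory Defs
  imports Main
begin

text \<open>Letters of the alphabet X \<union> X^{-1}: Pos x stands for x, Neg x for x^{-1}.
  The generating set X is the type 'a.\<close>
datatype 'a letter = Pos 'a | Neg 'a

type_synonym 'b rws = "('b list \<times> 'b list) set"

definition rstep :: "'b rws \<Rightarrow> ('b list \<times> 'b list) set" where
  "rstep S = {(u @ l @ v, u @ r @ v) | u l r v. (l, r) \<in> S}"

definition rcong :: "'b rws \<Rightarrow> ('b list \<times> 'b list) set" where
  "rcong S = (rstep S \<union> (rstep S)\<inverse>)\<^sup>*"

definition terminating :: "'b rws \<Rightarrow> bool" where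
  "terminating S \<longleftrightarrow> \<not> (\<exists>f :: nat \<Rightarrow> 'b list. \<forall>i. (f i, f (Suc i)) \<in> rstep S)"

definition confluent :: "'b rws \<Rightarrow> bool" where
  "confluent S \<longleftrightarrow> (\<forall>w a b. (w, a) \<in> (rstep S)\<^sup>* \<and> (w, b) \<in> (rstep S)\<^sup>* \<longrightarrow>
       (\<exists>c. (a, c) \<in> (rstep S)\<^sup>* \<and> (b, c) \<in> (rstep S)\<^sup>*))"

definition complete :: "'b rws \<Rightarrow> bool" where
  "complete S \<longleftrightarrow> terminating S \<and> confluent S"

definition R0 :: "'a letter rws" where
  "R0 = {([Pos x, Neg x], []) | x. True} \<union> {([Neg x, Pos x], []) | x. True}"

definition positive :: "'a letter list \<Rightarrow> bool" where
  "positive w \<longleftrightarrow> (\<forall>c \<in> set w. \<exists>x. c = Pos x)"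

definition pos_rules :: "'a letter rws \<Rightarrow> 'a letter rws" where
  "pos_rules S = {(l, r) \<in> S. positive l}"

definition cond_C_plus :: "'a letter rws \<Rightarrow> bool" where
  "cond_C_plus S \<longleftrightarrow> pos_rules S \<noteq> {} \<and> (\<forall>(l, r) \<in> pos_rules S. positive r)"

text \<open>A rewriting system for G = Gp<X | R>: its congruence equals that of R \<union> R0.\<close>
definition rws_for_group :: "'a letter rws \<Rightarrow> 'a letter rws \<Rightarrow> bool" where
  "rws_for_group S R \<longleftrightarrow> rcong S = rcong (R \<union> R0)"

text \<open>The relations of M = Mon<X | Re+>, viewed as pairs of words over X.\<close>
definition mon_rels :: "'a letter rws \<Rightarrow> 'a rws" where
  "mon_rels S = {(l, r). (map Pos l, map Pos r) \<in> pos_rules S}"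

end

theory Submission
  imports Defs
begin

(*
  Idea: let u, v be positive words equal in G.  Since Re is a rewriting
  system for G, u and v are congruent modulo Re, and since Re is confluent
  (Church-Rosser) they rewrite to a common descendant c.  Under condition C+
  every rule applicable to a positive word has a positive left-hand side and
  hence a positive right-hand side, so each rewriting step from a positive
  word is the image of a step with the relations of M = Mon<X | Re+>.  Thus
  u and v both rewrite in M to the same preimage of c, i.e. u = v in M.
*)

lemma confluent_rcong_joinable:
  assumes "confluent S" and "(a, b) \<in> rcong S"
  shows "\<exists>c. (a, c) \<in> (rstep S)\<^sup>* \<and> (b, c) \<in> (rstep S)\<^sup>*"
  using assms(2) unfolding rcong_def
proof (induction rule: rtrancl_induct)
  case base
  then show ?case by blast
next
  case (step b b')
  then obtain c where ac: "(a, c) \<in> (rstep S)\<^sup>*" and bc: "(b, c) \<in> (rstep S)\<^sup>*"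
    by blast
  from step.hyps(2) show ?case
  proof
    assume "(b, b') \<in> rstep S"
    with bc assms(1) obtain d where "(c, d) \<in> (rstep S)\<^sup>*" "(b', d) \<in> (rstep S)\<^sup>*"
      unfolding confluent_def by blast
    with ac show ?thesis by (meson rtrancl_trans)
  qed (use ac bc in \<open>meson converse_iff converse_rtrancl_into_rtrancl\<close>)
qed

lemma common_descendant_rcong:
  assumes "(a, c) \<in> (rstep S)\<^sup>*" and "(b, c) \<in> (rstep S)\<^sup>*"
  shows "(a, b) \<in> rcong S"
proof -
  let ?E = "rstep S \<union> (rstep S)\<inverse>"
  have "(a, c) \<in> ?E\<^sup>*" "(b, c) \<in> ?E\<^sup>*"
    using assms rtrancl_mono[of "rstep S" ?E] by blast+
  moreover have "(?E\<^sup>*)\<inverse> = ?E\<^sup>*"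
    by (simp add: rtrancl_converse[symmetric] converse_Un Un_commute)
  ultimately have "(c, b) \<in> ?E\<^sup>*" by blast
  with \<open>(a, c) \<in> ?E\<^sup>*\<close> show ?thesis
    unfolding rcong_def by (rule rtrancl_trans)
qed

lemma positive_iff_map_Pos: "positive w \<longleftrightarrow> (\<exists>w'. w = map Pos w')"
proof
  assume "positive w"
  then show "\<exists>w'. w = map Pos w'"
  proof (induction w)
    case (Cons c w)
    then obtain x where "c = Pos x" and "positive w" unfolding positive_def by auto
    with Cons.IH obtain w' where "w = map Pos w'" by blast
    with \<open>c = Pos x\<close> have "c # w = map Pos (x # w')" by simp
    then show ?case by (rule exI)
  qed simp
qed (auto simp: positive_def)

lemma rstep_from_positive:
  assumes pos_rhs: "\<forall>(l, r) \<in> pos_rules Re. positive r"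
    and step: "(map Pos w, z) \<in> rstep Re"
  shows "\<exists>z'. z = map Pos z' \<and> (w, z') \<in> rstep (mon_rels Re)"
proof -
  from step obtain x l r y where w: "map Pos w = x @ l @ y" and z: "z = x @ r @ y"
    and lr: "(l, r) \<in> Re"
    unfolding rstep_def by blast
  from w obtain x' l' y' where "x = map Pos x'" "l = map Pos l'" "y = map Pos y'"
    and w': "w = x' @ l' @ y'"
    by (metis map_eq_append_conv)
  moreover have lr_pos: "(l, r) \<in> pos_rules Re"
    using lr \<open>l = map Pos l'\<close> positive_iff_map_Pos unfolding pos_rules_def by blast
  moreover from lr_pos pos_rhs obtain r' where "r = map Pos r'"
    using positive_iff_map_Pos by blast
  ultimately have "(l', r') \<in> mon_rels Re" and "z = map Pos (x' @ r' @ y')"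
    using z unfolding mon_rels_def by simp_all
  moreover from \<open>(l', r') \<in> mon_rels Re\<close> have "(w, x' @ r' @ y') \<in> rstep (mon_rels Re)"
    unfolding rstep_def w' by blast
  ultimately show ?thesis by blast
qed

lemma reduction_from_positive:
  assumes pos_rhs: "\<forall>(l, r) \<in> pos_rules Re. positive r"
    and "(map Pos u, z) \<in> (rstep Re)\<^sup>*"
  shows "\<exists>z'. z = map Pos z' \<and> (u, z') \<in> (rstep (mon_rels Re))\<^sup>*"
  using assms(2)
proof (induction rule: rtrancl_induct)
  case base
  then show ?case by blast
next
  case (step z1 z2)
  then obtain z1' where "z1 = map Pos z1'" and "(u, z1') \<in> (rstep (mon_rels Re))\<^sup>*"
    by blast
  with rstep_from_positive[OF pos_rhs] step.hyps(2) show ?case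
    by (metis rtrancl.rtrancl_into_rtrancl)
qed

theorem theorem3p7:
  fixes R Re :: "'a letter rws"
  assumes "rws_for_group Re R"
    and "complete Re"
    and "cond_C_plus Re"
  shows "\<forall>u v :: 'a list. (map Pos u, map Pos v) \<in> rcong (R \<union> R0) \<longrightarrow>
           (u, v) \<in> rcong (mon_rels Re)"
proof (intro allI impI)
  fix u v :: "'a list"
  assume "(map Pos u, map Pos v) \<in> rcong (R \<union> R0)"
  then have "(map Pos u, map Pos v) \<in> rcong Re"
    using assms(1) unfolding rws_for_group_def by simp
  with assms(2) obtain c where "(map Pos u, c) \<in> (rstep Re)\<^sup>*" "(map Pos v, c) \<in> (rstep Re)\<^sup>*"
    using confluent_rcong_joinable unfolding complete_def by blast
  moreover have pos_rhs: "\<forall>(l, r) \<in> pos_rules Re. positive r"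
    using assms(3) unfolding cond_C_plus_def by blast
  ultimately obtain cu cv where "c = map Pos cu" "(u, cu) \<in> (rstep (mon_rels Re))\<^sup>*"
    and "c = map Pos cv" "(v, cv) \<in> (rstep (mon_rels Re))\<^sup>*"
    using reduction_from_positive by metis
  moreover from \<open>c = map Pos cu\<close> \<open>c = map Pos cv\<close> have "cu = cv"
    by (simp add: inj_map_eq_map inj_def)
  ultimately show "(u, v) \<in> rcong (mon_rels Re)"
    using common_descendant_rcong by metis
qed

end
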